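(* Let $(\Omega,\mathcal{F},\mathbb{P})$ be a nonatomic probability space, let $\mathbb{Q}$ be a probability measure on $(\Omega,\mathcal{F})$ absolutely continuous with respect to $\mathbb{P}$, and let $\mathcal{A}_\mathbb{Q}^\infty=\{X\in L^\infty:\mathbb{E}[XY]\ge0\text{ for all }Y\sim\frac{d\mathbb{Q}}{d\mathbb{P}}\}$. Let $S=(S_0,S_T)$ be a traded asset with $S_T\in L^\infty$. Then $\rho_{\mathcal{A}_\mathbb{Q}^\infty,S}$ is finite-valued (hence continuous) on $L^\infty$ if and only if $\inf_{Z\sim S_T}\mathbb{E}_\mathbb{Q}[Z]>0$.
   Context: $Y\sim Z$ means $Y$ and $Z$ (random variables on $\Omega$) have the same law under $\mathbb{P}$. A traded asset is $S=(S_0,S_T)$ with $S_0>0$, $S_T\ge0$ a.s., $S_T\ne0$. For $\mathcal{B}\subset L^\infty$, $\rho_{\mathcal{B},S}(X)=\inf\{m\in\mathbb{R}:X+\frac{m}{S_0}S_T\in\mathcal{B}\}$. *)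

theory Defs
  imports "HOL-Probability.Probability"
begin

definition nonatomic :: "'a measure \<Rightarrow> bool" where
  "nonatomic M \<longleftrightarrow> (\<forall>A\<in>sets M. measure M A > 0 \<longrightarrow>
      (\<exists>B\<in>sets M. B \<subseteq> A \<and> 0 < measure M B \<and> measure M B < measure M A))"

definition Linf :: "'a measure \<Rightarrow> ('a \<Rightarrow> real) set" where
  "Linf M = {X. X \<in> borel_measurable M \<and> (\<exists>C. AE x in M. \<bar>X x\<bar> \<le> C)}"

definition same_law :: "'a measure \<Rightarrow> ('a \<Rightarrow> real) \<Rightarrow> ('a \<Rightarrow> real) \<Rightarrow> bool" where
  "same_law M Y Z \<longleftrightarrow> Y \<in> borel_measurable M \<and> Z \<in> borel_measurable M \<and>
      distr M borel Y = distr M borel Z"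

definition dens :: "'a measure \<Rightarrow> 'a measure \<Rightarrow> 'a \<Rightarrow> real" where
  "dens M Q = (\<lambda>x. enn2real (RN_deriv M Q x))"

definition accQ :: "'a measure \<Rightarrow> 'a measure \<Rightarrow> ('a \<Rightarrow> real) set" where
  "accQ M Q = {X \<in> Linf M. \<forall>Y. same_law M Y (dens M Q) \<longrightarrow>
       0 \<le> integral\<^sup>L M (\<lambda>x. X x * Y x)}"

definition traded_asset :: "'a measure \<Rightarrow> real \<Rightarrow> ('a \<Rightarrow> real) \<Rightarrow> bool" where
  "traded_asset M S0 ST \<longleftrightarrow> S0 > 0 \<and> ST \<in> borel_measurable M \<and>
      (AE x in M. ST x \<ge> 0) \<and> \<not> (AE x in M. ST x = 0)"

text \<open>Risk measure rho_{B,S}(X) = inf {m. X + m/S0 * ST \<in> B}, valued in the extended reals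
  (inf of the empty set is +infinity).\<close>
definition rho :: "('a \<Rightarrow> real) set \<Rightarrow> real \<Rightarrow> ('a \<Rightarrow> real) \<Rightarrow> ('a \<Rightarrow> real) \<Rightarrow> ereal" where
  "rho B S0 ST X = Inf (ereal ` {m. (\<lambda>x. X x + m / S0 * ST x) \<in> B})"

end

theory Submission
  imports Defs
begin

text \<open>
  Both sides turn out to be equivalent to: \<open>P(S\<^sub>T > a) > P(dQ/dP \<le> \<delta>)\<close> for some
  \<open>a, \<delta> > 0\<close>. If this holds, a Markov-type estimate bounds \<open>E[S\<^sub>T Y]\<close> from below uniformly
  over all \<open>Y\<close> with the law of \<open>dQ/dP\<close>, which makes \<open>\<rho>\<close> finite, and likewise bounds
  \<open>E\<^sub>Q[Z] = E[Z dQ/dP]\<close> uniformly over all \<open>Z\<close> with the law of \<open>S\<^sub>T\<close>. If it fails, then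
  \<open>P(S\<^sub>T > 0) \<le> P(dQ/dP = 0)\<close>, and nonatomicity lets us rearrange \<open>S\<^sub>T\<close> onto
  \<open>{dQ/dP = 0}\<close>, giving price \<open>0\<close>, and \<open>dQ/dP\<close> onto \<open>{S\<^sub>T = 0}\<close>, against which no position
  \<open>-1 + m S\<^sub>T/S\<^sub>0\<close> is acceptable, so \<open>\<rho>(-1) = \<infinity>\<close>. The rearrangements compose a quantile
  function with a uniform variable, built by repeated halving from Sierpinski's theorem that
  nonatomic measures take all intermediate values.
\<close>

section \<open>Nonatomic measures take all intermediate values\<close>

context finite_measure begin

lemma nonatomic_subset_le_divide_pow:
  assumes "nonatomic M" "A \<in> sets M" "measure M A > 0"
  shows "\<exists>C\<in>sets M. C \<subseteq> A \<and> 0 < measure M C \<and> measure M C \<le> measure M A / 2^n"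
  using assms(2,3)
proof (induction n arbitrary: A)
  case 0
  then show ?case by auto
next
  case (Suc n)
  from assms(1) Suc.prems obtain B where B: "B \<in> sets M" "B \<subseteq> A" "0 < measure M B" "measure M B < measure M A"
    unfolding nonatomic_def by blast
  have diff: "measure M (A - B) = measure M A - measure M B"
    using B Suc.prems by (simp add: finite_measure_Diff)
  obtain C0 where C0: "C0 \<in> sets M" "C0 \<subseteq> A" "0 < measure M C0" "measure M C0 \<le> measure M A / 2"
  proof (cases "measure M B \<le> measure M A / 2")
    case True
    then show ?thesis using B that by blast
  next
    case False
    show ?thesis
      by (rule that[of "A - B"]) (use B Suc.prems diff False in auto)
  qed
  from Suc.IH[OF C0(1) C0(3)] obtain C where
    C: "C\<in>sets M" "C \<subseteq> C0" "0 < measure M C" "measure M C \<le> measure M C0 / 2^n"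
    by blast
  have "measure M C0 / 2^n \<le> (measure M A / 2) / 2^n"
    using C0(4) by (intro divide_right_mono) auto
  then show ?case using C C0 by (intro bexI[of _ C]) auto
qed

lemma nonatomic_small_subset:
  assumes "nonatomic M" "A \<in> sets M" "measure M A > 0" "e > 0"
  shows "\<exists>C\<in>sets M. C \<subseteq> A \<and> 0 < measure M C \<and> measure M C < e"
proof -
  obtain n where n: "measure M A / e < 2 ^ n" using real_arch_pow[of 2] by auto
  then have "measure M A / 2^n < e" using assms(4) by (simp add: field_simps)
  then show ?thesis
    using nonatomic_subset_le_divide_pow[OF assms(1-3), of n] by (meson order.strict_trans1)
qed

lemma exists_half_maximal_subset:
  assumes "B \<in> sets M" "measure M B \<le> t"
  shows "\<exists>C\<in>sets M. C \<subseteq> A - B \<and> measure M C \<le> t - measure M B \<and>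
     (\<forall>C'\<in>sets M. C' \<subseteq> A - B \<longrightarrow> measure M C' \<le> t - measure M B \<longrightarrow> measure M C' \<le> 2 * measure M C)"
proof -
  define cand where "cand = {measure M C | C. C \<in> sets M \<and> C \<subseteq> A - B \<and> measure M C \<le> t - measure M B}"
  have bdd: "bdd_above cand" unfolding cand_def by (auto intro!: bdd_aboveI[of _ "t - measure M B"])
  have "0 \<in> cand" using assms unfolding cand_def by (auto intro!: exI[of _ "{}"])
  have le_Sup: "measure M C' \<le> Sup cand"
    if "C' \<in> sets M" "C' \<subseteq> A - B" "measure M C' \<le> t - measure M B" for C'
    using that by (intro cSup_upper[OF _ bdd]) (auto simp: cand_def)
  show ?thesis
  proof (cases "Sup cand \<le> 0")
    case True
    then show ?thesis
      using assms by (intro bexI[of _ "{}"] conjI ballI impI) (auto intro: order_trans[OF le_Sup])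
  next
    case False
    then have "Sup cand / 2 < Sup cand" by simp
    then obtain x where "x \<in> cand" "Sup cand / 2 < x"
      using less_cSup_iff[OF _ bdd] \<open>0 \<in> cand\<close> by blast
    then obtain C where "C \<in> sets M" "C \<subseteq> A - B" "measure M C \<le> t - measure M B" "Sup cand < 2 * measure M C"
      unfolding cand_def by auto
    then show ?thesis
      by (intro bexI[of _ C] conjI ballI impI) (auto intro: order_trans[OF le_Sup])
  qed
qed

lemma greedy_subset_sequence:
  assumes "0 \<le> t"
  obtains Bs where "\<And>n. Bs n \<in> sets M" "\<And>n. Bs n \<subseteq> A" "\<And>n. measure M (Bs n) \<le> t"
    "\<And>n. Bs n \<subseteq> Bs (Suc n)"
    "\<And>C n. C \<in> sets M \<Longrightarrow> C \<subseteq> A - Bs n \<Longrightarrow> measure M C \<le> t - measure M (Bs n) \<Longrightarrow>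
      measure M C \<le> 2 * measure M (Bs (Suc n) - Bs n)"
proof -
  define admissible where "admissible B \<longleftrightarrow> B \<in> sets M \<and> B \<subseteq> A \<and> measure M B \<le> t" for B
  define greedy where "greedy B B' \<longleftrightarrow> B \<subseteq> B' \<and> (\<forall>C\<in>sets M. C \<subseteq> A - B \<longrightarrow>
    measure M C \<le> t - measure M B \<longrightarrow> measure M C \<le> 2 * measure M (B' - B))" for B B'
  have "\<exists>B'. admissible B' \<and> greedy B B'" if B: "admissible B" for B
  proof -
    obtain C where C: "C \<in> sets M" "C \<subseteq> A - B" "measure M C \<le> t - measure M B"
      and max: "\<forall>C'\<in>sets M. C' \<subseteq> A - B \<longrightarrow> measure M C' \<le> t - measure M B \<longrightarrow> measure M C' \<le> 2 * measure M C"
      using exists_half_maximal_subset[of B t A] B unfolding admissible_def by blast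
    have "measure M (B \<union> C) = measure M B + measure M C"
      using C B unfolding admissible_def by (intro finite_measure_Union) auto
    moreover have "B \<union> C - B = C" using C by auto
    ultimately show ?thesis
      using B C max unfolding admissible_def greedy_def by (intro exI[of _ "B \<union> C"]) auto
  qed
  moreover have "admissible {}" using assms by (simp add: admissible_def)
  ultimately obtain Bs where adm: "\<And>n. admissible (Bs n)" and greedy: "\<And>n. greedy (Bs n) (Bs (Suc n))"
    using dependent_nat_choice[of "\<lambda>_. admissible" "\<lambda>_. greedy"] by blast
  have "Bs n \<in> sets M" "Bs n \<subseteq> A" "measure M (Bs n) \<le> t" for n
    using adm[of n] unfolding admissible_def by auto
  moreover have "Bs n \<subseteq> Bs (Suc n)" for n
    using greedy[of n] unfolding greedy_def by blast
  moreover have "measure M C \<le> 2 * measure M (Bs (Suc n) - Bs n)"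
    if "C \<in> sets M" "C \<subseteq> A - Bs n" "measure M C \<le> t - measure M (Bs n)" for C n
    using greedy[of n] that unfolding greedy_def by blast
  ultimately show thesis by (rule that)
qed

text \<open>Sierpinski's theorem: the union of a greedy sequence has measure exactly \<open>t\<close>, since
  otherwise nonatomicity leaves a small set that the greedy steps would have had to pick up.\<close>
lemma nonatomic_subset_measure_eq:
  assumes na: "nonatomic M" and A: "A \<in> sets M" and t: "0 \<le> t" "t \<le> measure M A"
  shows "\<exists>B\<in>sets M. B \<subseteq> A \<and> measure M B = t"
proof -
  obtain Bs where Bs_sets: "\<And>n. Bs n \<in> sets M" "\<And>n. Bs n \<subseteq> A" "\<And>n. measure M (Bs n) \<le> t"
    and Bs_Suc: "\<And>n. Bs n \<subseteq> Bs (Suc n)"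
    and Bs_half: "\<And>C n. C \<in> sets M \<Longrightarrow> C \<subseteq> A - Bs n \<Longrightarrow> measure M C \<le> t - measure M (Bs n) \<Longrightarrow>
      measure M C \<le> 2 * measure M (Bs (Suc n) - Bs n)"
    using greedy_subset_sequence[OF t(1), where A=A] by blast
  let ?B = "\<Union>n. Bs n"
  have inc: "incseq Bs" using Bs_Suc by (rule incseq_SucI)
  have B: "?B \<in> sets M" "?B \<subseteq> A" using Bs_sets by auto
  have lim: "(\<lambda>n. measure M (Bs n)) \<longlonglongrightarrow> measure M ?B"
    using Bs_sets inc by (intro Lim_measure_incseq) auto
  have B_le: "measure M ?B \<le> t"
    using Bs_sets by (intro LIMSEQ_le_const2[OF lim]) auto
  have "(\<lambda>n. measure M (Bs (Suc n)) - measure M (Bs n)) \<longlonglongrightarrow> measure M ?B - measure M ?B"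
    by (intro tendsto_diff lim LIMSEQ_Suc[OF lim])
  moreover have "measure M (Bs (Suc n) - Bs n) = measure M (Bs (Suc n)) - measure M (Bs n)" for n
    using Bs_sets Bs_Suc by (intro finite_measure_Diff) auto
  ultimately have increments: "(\<lambda>n. measure M (Bs (Suc n) - Bs n)) \<longlonglongrightarrow> 0" by simp
  have "\<not> measure M ?B < t"
  proof
    assume lt: "measure M ?B < t"
    have "measure M (A - ?B) = measure M A - measure M ?B" using A B by (simp add: finite_measure_Diff)
    then obtain C where C: "C \<in> sets M" "C \<subseteq> A - ?B" "0 < measure M C" "measure M C < t - measure M ?B"
      using nonatomic_small_subset[OF na, of "A - ?B" "t - measure M ?B"] lt t A B by auto
    obtain n where n: "measure M (Bs (Suc n) - Bs n) < measure M C / 2"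
      using order_tendstoD(2)[OF increments, of "measure M C / 2"] C(3)
      by (auto simp: eventually_sequentially)
    have "measure M (Bs n) \<le> measure M ?B" using B by (intro finite_measure_mono) auto
    then have "measure M C \<le> t - measure M (Bs n)" using C(4) by linarith
    moreover have "C \<subseteq> A - Bs n" using C(2) by blast
    ultimately have "measure M C \<le> 2 * measure M (Bs (Suc n) - Bs n)"
      using C(1) Bs_half by blast
    then show False using n by linarith
  qed
  then show ?thesis using B_le B by (intro bexI[of _ ?B]) auto
qed

end

section \<open>Uniform variables on nonatomic spaces\<close>

definition uniform_on :: "'a measure \<Rightarrow> 'a set \<Rightarrow> ('a \<Rightarrow> real) \<Rightarrow> bool" where
  "uniform_on M A U \<longleftrightarrow> U \<in> borel_measurable M \<and> (\<forall>x. 0 \<le> U x \<and> U x \<le> 1) \<and>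
     (\<forall>t. 0 \<le> t \<longrightarrow> t \<le> 1 \<longrightarrow> measure M {x\<in>A. U x \<le> t} = t * measure M A)"

lemma card_dyadic_le:
  assumes "0 \<le> t"
  shows "real (card {k. k < 2^n \<and> real k / 2^n \<le> t}) \<le> t * 2^n + 1"
proof -
  define f where "f = nat \<lfloor>t * 2^n\<rfloor>"
  have "real f \<le> t * 2^n" unfolding f_def using assms by simp
  have "{k. k < 2^n \<and> real k / 2^n \<le> t} \<subseteq> {..f}"
    unfolding f_def by (auto intro!: le_nat_floor simp: field_simps)
  then have "card {k. k < 2^n \<and> real k / 2^n \<le> t} \<le> f + 1"
    using card_mono[of "{..f}"] by fastforce
  then show ?thesis using \<open>real f \<le> t * 2^n\<close> by linarith
qed

lemma card_dyadic_succ_ge: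
  assumes "0 \<le> t" "t \<le> 1"
  shows "t * 2^n - 1 \<le> real (card {k. k < 2^n \<and> real k / 2^n + 1 / 2^n \<le> t})"
proof -
  define f where "f = nat \<lfloor>t * 2^n\<rfloor>"
  have f: "real f \<le> t * 2^n" "t * 2^n - 1 < real f"
    unfolding f_def using assms floor_correct[of "t * 2^n"] by auto
  have "{..<f} \<subseteq> {k. k < 2^n \<and> real k / 2^n + 1 / 2^n \<le> t}"
  proof
    fix k assume "k \<in> {..<f}"
    then have k1: "real k + 1 \<le> t * 2^n" using f by (simp add: Suc_leI flip: of_nat_Suc)
    moreover have "t * 2^n \<le> 2^n" using assms by simp
    ultimately have "real k < 2^n" by linarith
    then have "k < 2^n" by (metis of_nat_less_iff of_nat_numeral of_nat_power)
    moreover have "real k / 2^n + 1 / 2^n \<le> t" using k1 by (simp add: field_simps)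
    ultimately show "k \<in> {k. k < 2^n \<and> real k / 2^n + 1 / 2^n \<le> t}" by auto
  qed
  then have "f \<le> card {k. k < 2^n \<and> real k / 2^n + 1 / 2^n \<le> t}"
    using card_mono[of "{k. k < 2^n \<and> real k / 2^n + 1 / 2^n \<le> t}" "{..<f}"] by auto
  then show ?thesis using f by linarith
qed

text \<open>Cell \<open>k\<close> of generation \<open>n\<close> corresponds to the dyadic interval \<open>[k/2^n, (k+1)/2^n)\<close>:
  cells \<open>2k\<close> and \<open>2k+1\<close> of the next generation are the halves \<open>H C\<close> and \<open>C - H C\<close> of cell \<open>k\<close>.\<close>
primrec dyadic_cells :: "('a set \<Rightarrow> 'a set) \<Rightarrow> 'a set \<Rightarrow> nat \<Rightarrow> nat \<Rightarrow> 'a set" where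
  "dyadic_cells H A 0 k = (if k = 0 then A else {})"
| "dyadic_cells H A (Suc n) k = (if even k then H (dyadic_cells H A n (k div 2))
      else dyadic_cells H A n (k div 2) - H (dyadic_cells H A n (k div 2)))"

context finite_measure begin

context
  fixes H and A
  assumes halving: "\<And>C. C \<in> sets M \<Longrightarrow> H C \<in> sets M \<and> H C \<subseteq> C \<and> measure M (H C) = measure M C / 2"
    and A: "A \<in> sets M"
begin

lemma dyadic_cells_sets: "dyadic_cells H A n k \<in> sets M"
  by (induction n arbitrary: k) (auto simp: A halving)

lemma dyadic_cells_Suc_subset: "dyadic_cells H A (Suc n) k \<subseteq> dyadic_cells H A n (k div 2)"
  using halving[OF dyadic_cells_sets[of n "k div 2"]] by auto

lemma dyadic_cells_subset: "dyadic_cells H A n k \<subseteq> A"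
proof (induction n arbitrary: k)
  case (Suc n) then show ?case using dyadic_cells_Suc_subset[of n k] by blast
qed auto

lemma measure_dyadic_cells: "k < 2^n \<Longrightarrow> measure M (dyadic_cells H A n k) = measure M A / 2^n"
proof (induction n arbitrary: k)
  case 0 then show ?case by auto
next
  case (Suc n)
  let ?c = "dyadic_cells H A n (k div 2)"
  have h: "measure M (H ?c) = measure M ?c / 2" "H ?c \<subseteq> ?c" "H ?c \<in> sets M"
    using halving[OF dyadic_cells_sets] by auto
  have "measure M (?c - H ?c) = measure M ?c - measure M (H ?c)"
    using h dyadic_cells_sets by (intro finite_measure_Diff) auto
  then show ?case using Suc h by auto
qed

lemma dyadic_cells_disjoint: "j \<noteq> k \<Longrightarrow> dyadic_cells H A n j \<inter> dyadic_cells H A n k = {}"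
proof (induction n arbitrary: j k)
  case 0 then show ?case by auto
next
  case (Suc n)
  show ?case
  proof (cases "j div 2 = k div 2")
    case False
    then show ?thesis
      using Suc.IH[OF False] dyadic_cells_Suc_subset[of n j] dyadic_cells_Suc_subset[of n k] by blast
  next
    case True
    then have "even j \<noteq> even k" using Suc.prems by (metis dvd_mult_div_cancel odd_two_times_div_two_succ)
    then show ?thesis using True by auto
  qed
qed

lemma dyadic_cells_cover: "x \<in> A \<Longrightarrow> \<exists>k<2^n. x \<in> dyadic_cells H A n k"
proof (induction n)
  case 0 then show ?case by auto
next
  case (Suc n)
  then obtain k where k: "k < 2^n" "x \<in> dyadic_cells H A n k" by auto
  show ?case
  proof (cases "x \<in> H (dyadic_cells H A n k)")
    case True
    then show ?thesis using k by (intro exI[of _ "2*k"]) auto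
  next
    case False
    then show ?thesis using k by (intro exI[of _ "2*k+1"]) auto
  qed
qed

definition dyadic_approx :: "nat \<Rightarrow> 'a \<Rightarrow> real" where
  "dyadic_approx n x = (\<Sum>k<2^n. real k * indicator (dyadic_cells H A n k) x) / 2^n"

lemma dyadic_approx_measurable: "dyadic_approx n \<in> borel_measurable M"
  unfolding dyadic_approx_def using dyadic_cells_sets by measurable

lemma dyadic_approx_cell:
  assumes "x \<in> dyadic_cells H A n k" "k < 2^n"
  shows "dyadic_approx n x = real k / 2^n"
proof -
  have "real j * indicator (dyadic_cells H A n j) x = (if j = k then real k else 0)" for j
    using assms dyadic_cells_disjoint[of j k n] by (auto simp: indicator_def)
  then have "(\<Sum>j<2^n. real j * indicator (dyadic_cells H A n j) x) = (\<Sum>j<2^n. if j = k then real k else 0)"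
    by (intro sum.cong) auto
  also have "\<dots> = real k" using assms by (simp add: sum.delta)
  finally show ?thesis by (simp add: dyadic_approx_def)
qed

lemma dyadic_approx_outside: "x \<notin> A \<Longrightarrow> dyadic_approx n x = 0"
proof -
  assume "x \<notin> A"
  then have "indicator (dyadic_cells H A n k) x = (0::real)" for k
    using dyadic_cells_subset by (auto simp: indicator_def)
  then show ?thesis by (simp add: dyadic_approx_def)
qed

lemma dyadic_approx_bounds: "0 \<le> dyadic_approx n x \<and> dyadic_approx n x \<le> 1"
proof (cases "x \<in> A")
  case True
  then obtain k where k: "k < 2^n" "x \<in> dyadic_cells H A n k" using dyadic_cells_cover by blast
  then have "real k \<le> 2^n" by (metis less_imp_le of_nat_le_iff of_nat_numeral of_nat_power)
  then show ?thesis using dyadic_approx_cell[OF k(2,1)] by simp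
next
  case False then show ?thesis by (simp add: dyadic_approx_outside)
qed

lemma dyadic_approx_Suc:
  "dyadic_approx n x \<le> dyadic_approx (Suc n) x \<and> dyadic_approx (Suc n) x \<le> dyadic_approx n x + 1 / 2^Suc n"
proof (cases "x \<in> A")
  case True
  then obtain k where k: "k < 2^Suc n" "x \<in> dyadic_cells H A (Suc n) k" using dyadic_cells_cover by blast
  have "k div 2 < 2^n" "x \<in> dyadic_cells H A n (k div 2)" using k dyadic_cells_Suc_subset by auto
  then have "dyadic_approx n x = (real (k div 2) * 2) / 2^Suc n" and "dyadic_approx (Suc n) x = real k / 2^Suc n"
    using dyadic_approx_cell k by auto
  moreover have "real (k div 2) * 2 \<le> real k" "real k \<le> real (k div 2) * 2 + 1"
    by (simp_all add: of_nat_mult[symmetric] del: of_nat_mult)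
  ultimately show ?thesis
    by (metis add_divide_distrib divide_right_mono zero_le_numeral zero_le_power)
next
  case False then show ?thesis by (simp add: dyadic_approx_outside)
qed

lemma dyadic_approx_mono: "m \<le> n \<Longrightarrow> dyadic_approx m x \<le> dyadic_approx n x"
  by (induction n rule: dec_induct) (auto intro: order_trans dyadic_approx_Suc[THEN conjunct1])

lemma dyadic_approx_le: "dyadic_approx m x \<le> dyadic_approx n x + 1/2^n"
proof (cases "m \<le> n")
  case True then show ?thesis using dyadic_approx_mono[OF True, of x] by (simp add: add_increasing2)
next
  case False
  have "n \<le> m \<Longrightarrow> dyadic_approx m x \<le> dyadic_approx n x + 1/2^n - 1/2^m"
  proof (induction m rule: dec_induct)
    case (step m)
    have "1/(2::real)^m = 2 * (1/2^Suc m)" by simp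
    then show ?case using dyadic_approx_Suc[of m x] step by linarith
  qed simp
  moreover have "0 \<le> 1/(2::real)^m" by simp
  ultimately show ?thesis using False by linarith
qed

definition dyadic_uniform :: "'a \<Rightarrow> real" where
  "dyadic_uniform x = (SUP n. dyadic_approx n x)"

lemma bdd_above_dyadic_approx: "bdd_above (range (\<lambda>n. dyadic_approx n x))"
  using dyadic_approx_bounds by (intro bdd_aboveI[of _ 1]) auto

lemma dyadic_approx_le_uniform: "dyadic_approx n x \<le> dyadic_uniform x"
  unfolding dyadic_uniform_def using bdd_above_dyadic_approx by (intro cSUP_upper) auto

lemma dyadic_uniform_measurable: "dyadic_uniform \<in> borel_measurable M"
  unfolding dyadic_uniform_def using dyadic_approx_measurable bdd_above_dyadic_approx
  by (intro borel_measurable_cSUP) auto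

lemma dyadic_uniform_bounds: "0 \<le> dyadic_uniform x \<and> dyadic_uniform x \<le> 1"
  using dyadic_approx_le_uniform[of 0 x] dyadic_approx_bounds
  by (auto simp: dyadic_uniform_def intro: order_trans cSUP_least)

lemma dyadic_uniform_le: "dyadic_uniform x \<le> dyadic_approx n x + 1/2^n"
  unfolding dyadic_uniform_def using dyadic_approx_le by (intro cSUP_least) auto

lemma measure_dyadic_approx_pred:
  "measure M {x\<in>A. P (dyadic_approx n x)} = card {k. k<2^n \<and> P (real k / 2^n)} * (measure M A / 2^n)"
proof -
  have "measure M {x\<in>A. P (dyadic_approx n x)} = measure M (\<Union>k\<in>{k. k<2^n \<and> P (real k / 2^n)}. dyadic_cells H A n k)"
  proof (intro arg_cong[where f="measure M"] equalityI subsetI)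
    fix x assume "x \<in> {x\<in>A. P (dyadic_approx n x)}"
    then obtain k where "k<2^n" "x \<in> dyadic_cells H A n k" "P (dyadic_approx n x)"
      using dyadic_cells_cover by blast
    then show "x \<in> (\<Union>k\<in>{k. k<2^n \<and> P (real k / 2^n)}. dyadic_cells H A n k)"
      using dyadic_approx_cell by auto
  next
    fix x assume "x \<in> (\<Union>k\<in>{k. k<2^n \<and> P (real k / 2^n)}. dyadic_cells H A n k)"
    then show "x \<in> {x\<in>A. P (dyadic_approx n x)}"
      using dyadic_approx_cell dyadic_cells_subset by fastforce
  qed
  also have "\<dots> = (\<Sum>k\<in>{k. k<2^n \<and> P (real k / 2^n)}. measure M (dyadic_cells H A n k))"
    using dyadic_cells_sets dyadic_cells_disjoint
    by (intro finite_measure_finite_Union) (auto simp: disjoint_family_on_def)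
  also have "\<dots> = (\<Sum>k\<in>{k. k<2^n \<and> P (real k / 2^n)}. measure M A / 2^n)"
    using measure_dyadic_cells by (intro sum.cong) auto
  finally show ?thesis by simp
qed

lemma measure_dyadic_uniform_le_upper:
  assumes "0 \<le> t"
  shows "measure M {x\<in>A. dyadic_uniform x \<le> t} \<le> t * measure M A + measure M A / 2^n"
proof -
  have "{x\<in>A. dyadic_approx n x \<le> t} \<in> sets M" using dyadic_approx_measurable A by measurable
  then have "measure M {x\<in>A. dyadic_uniform x \<le> t} \<le> measure M {x\<in>A. dyadic_approx n x \<le> t}"
    using dyadic_approx_le_uniform[of n] by (intro finite_measure_mono) (auto intro: order_trans)
  also have "\<dots> = card {k. k<2^n \<and> real k / 2^n \<le> t} * (measure M A / 2^n)"
    by (rule measure_dyadic_approx_pred)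
  also have "\<dots> \<le> (t * 2^n + 1) * (measure M A / 2^n)"
    using card_dyadic_le[OF assms] by (intro mult_right_mono) auto
  also have "\<dots> = t * measure M A + measure M A / 2^n" by (simp add: field_simps)
  finally show ?thesis .
qed

lemma measure_dyadic_uniform_le_lower:
  assumes "0 \<le> t" "t \<le> 1"
  shows "t * measure M A - measure M A / 2^n \<le> measure M {x\<in>A. dyadic_uniform x \<le> t}"
proof -
  have "t * measure M A - measure M A / 2^n = (t * 2^n - 1) * (measure M A / 2^n)"
    by (simp add: field_simps)
  also have "\<dots> \<le> card {k. k<2^n \<and> real k / 2^n + 1/2^n \<le> t} * (measure M A / 2^n)"
    using card_dyadic_succ_ge[OF assms] by (intro mult_right_mono) auto
  also have "\<dots> = measure M {x\<in>A. dyadic_approx n x + 1/2^n \<le> t}"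
    by (rule measure_dyadic_approx_pred[symmetric])
  also have "\<dots> \<le> measure M {x\<in>A. dyadic_uniform x \<le> t}"
  proof (intro finite_measure_mono)
    show "{x\<in>A. dyadic_uniform x \<le> t} \<in> sets M"
      using dyadic_uniform_measurable A by measurable
  qed (use dyadic_uniform_le[of _ n] in \<open>auto intro: order_trans\<close>)
  finally show ?thesis .
qed

lemma uniform_on_dyadic_uniform: "uniform_on M A dyadic_uniform"
  unfolding uniform_on_def
proof (intro conjI allI impI)
  fix t :: real assume t: "0 \<le> t" "t \<le> 1"
  have upper: "(\<lambda>n. t * measure M A + measure M A / 2^n) \<longlonglongrightarrow> t * measure M A + 0"
    and lower: "(\<lambda>n. t * measure M A - measure M A / 2^n) \<longlonglongrightarrow> t * measure M A - 0"
    by (intro tendsto_intros LIMSEQ_divide_realpow_zero; simp)+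
  show "measure M {x\<in>A. dyadic_uniform x \<le> t} = t * measure M A"
  proof (rule antisym)
    show "measure M {x\<in>A. dyadic_uniform x \<le> t} \<le> t * measure M A"
      using LIMSEQ_le_const[OF upper] measure_dyadic_uniform_le_upper[OF t(1)] by simp
    show "t * measure M A \<le> measure M {x\<in>A. dyadic_uniform x \<le> t}"
      using LIMSEQ_le_const2[OF lower] measure_dyadic_uniform_le_lower[OF t] by simp
  qed
qed (use dyadic_uniform_measurable dyadic_uniform_bounds in auto)

end

end

lemma (in finite_measure) nonatomic_exists_uniform_on:
  assumes "nonatomic M" "A \<in> sets M"
  shows "\<exists>U. uniform_on M A U"
proof -
  define H where "H C = (SOME B. B \<in> sets M \<and> B \<subseteq> C \<and> measure M B = measure M C / 2)" for C
  have "H C \<in> sets M \<and> H C \<subseteq> C \<and> measure M (H C) = measure M C / 2" if "C \<in> sets M" for C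
    unfolding H_def
    by (rule someI_ex) (use nonatomic_subset_measure_eq[OF assms(1) that, of "measure M C / 2"] in auto)
  then show ?thesis using uniform_on_dyadic_uniform[OF _ assms(2)] by blast
qed

lemma (in finite_measure) measure_scaled_uniform_on:
  assumes "uniform_on M A V" "A \<in> sets M"
  shows "measure M {x\<in>A. measure M A * V x \<le> s} = min (max 0 s) (measure M A)"
proof -
  have V: "\<And>x. 0 \<le> V x \<and> V x \<le> 1"
    and uniform: "\<And>t. 0 \<le> t \<Longrightarrow> t \<le> 1 \<Longrightarrow> measure M {x\<in>A. V x \<le> t} = t * measure M A"
    using assms(1) unfolding uniform_on_def by auto
  have scaled_le: "0 \<le> measure M A * V x \<and> measure M A * V x \<le> measure M A" for x
    using V[of x] by (simp add: mult_left_le)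
  consider "s < 0" | "measure M A \<le> s" | "0 \<le> s" "s < measure M A" by linarith
  then show ?thesis
  proof cases
    case 1
    then have "\<not> measure M A * V x \<le> s" for x using scaled_le[of x] by linarith
    then have empty: "{x\<in>A. measure M A * V x \<le> s} = {}" by auto
    show ?thesis unfolding empty using 1 by simp
  next
    case 2
    then have "{x\<in>A. measure M A * V x \<le> s} = A" using scaled_le by (auto intro: order_trans)
    then show ?thesis using 2 by simp
  next
    case 3
    then have pos: "measure M A > 0" by linarith
    then have "{x\<in>A. measure M A * V x \<le> s} = {x\<in>A. V x \<le> s / measure M A}"
      by (auto simp: field_simps)
    then show ?thesis using 3 pos uniform[of "s / measure M A"] by simp
  qed
qed

lemma (in prob_space) uniform_on_glue:
  assumes U1: "uniform_on M E U1" and U2: "uniform_on M (space M - E) U2" and E: "E \<in> sets M"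
  shows "uniform_on M (space M) (\<lambda>x. if x \<in> E then prob E * U1 x else prob E + (1 - prob E) * U2 x)"
    (is "uniform_on M _ ?U")
proof -
  let ?F = "space M - E" and ?e = "prob E"
  have F: "?F \<in> sets M" using E by auto
  have f: "prob ?F = 1 - ?e" using prob_compl[OF E] .
  have meas[measurable]: "U1 \<in> borel_measurable M" "U2 \<in> borel_measurable M"
    using U1 U2 unfolding uniform_on_def by auto
  have bounds: "0 \<le> U1 x" "U1 x \<le> 1" "0 \<le> U2 x" "U2 x \<le> 1" for x
    using U1 U2 unfolding uniform_on_def by auto
  have e: "0 \<le> ?e" "?e \<le> 1" by auto
  have "0 \<le> ?U x \<and> ?U x \<le> 1" for x
    using bounds[of x] e mult_left_le[of "U1 x" ?e] mult_left_le[of "U2 x" "1 - ?e"]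
      mult_nonneg_nonneg[of ?e "U1 x"] mult_nonneg_nonneg[of "1 - ?e" "U2 x"] by (smt (verit))
  moreover have "prob {x\<in>space M. ?U x \<le> t} = t * prob (space M)" if t: "0 \<le> t" "t \<le> 1" for t
  proof -
    have "{x\<in>space M. ?U x \<le> t} = {x\<in>E. ?e * U1 x \<le> t} \<union> {x\<in>?F. (1 - ?e) * U2 x \<le> t - ?e}"
      using sets.sets_into_space[OF E] by auto
    moreover have "{x\<in>E. ?e * U1 x \<le> t} \<in> sets M" "{x\<in>?F. (1 - ?e) * U2 x \<le> t - ?e} \<in> sets M"
      using E by measurable
    ultimately have "prob {x\<in>space M. ?U x \<le> t} =
        prob {x\<in>E. ?e * U1 x \<le> t} + prob {x\<in>?F. (1 - ?e) * U2 x \<le> t - ?e}"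
      by (auto intro: finite_measure_Union)
    also have "\<dots> = min (max 0 t) ?e + min (max 0 (t - ?e)) (1 - ?e)"
      using measure_scaled_uniform_on[OF U1 E, of t] measure_scaled_uniform_on[OF U2 F, of "t - ?e"]
      by (simp add: f)
    also have "\<dots> = t * prob (space M)" using t e by (simp add: min_def max_def prob_space)
    finally show ?thesis .
  qed
  moreover have "?U \<in> borel_measurable M" using E by measurable
  ultimately show ?thesis unfolding uniform_on_def by blast
qed

lemma (in prob_space) nonatomic_exists_uniform_small_on:
  assumes na: "nonatomic M" and E: "E \<in> sets M"
  shows "\<exists>U. uniform_on M (space M) U \<and> (\<forall>x\<in>E. U x \<le> prob E)"
proof -
  obtain U1 U2 where U1: "uniform_on M E U1" and U2: "uniform_on M (space M - E) U2"
    using nonatomic_exists_uniform_on[OF na] E by blast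
  have "prob E * U1 x \<le> prob E" for x
    using U1 by (simp add: uniform_on_def mult_left_le)
  then show ?thesis using uniform_on_glue[OF U1 U2 E] by force
qed

section \<open>Rearrangements\<close>

definition quantile :: "real measure \<Rightarrow> real \<Rightarrow> real" where
  "quantile \<mu> u = indicator {0<..<1} u *\<^sub>R Inf {x. u \<le> cdf \<mu> x}"

lemma quantile_measurable:
  assumes "real_distribution \<mu>"
  shows "quantile \<mu> \<in> borel_measurable borel"
proof -
  interpret \<mu>: cdf_distribution \<mu> using assms unfolding cdf_distribution_def .
  show ?thesis
    using \<mu>.measurable_CI unfolding quantile_def
    by (subst (asm) borel_measurable_restrict_space_iff) auto
qed

lemma quantile_le_iff:
  assumes "real_distribution \<mu>" "0 < u" "u < 1"
  shows "quantile \<mu> u \<le> x \<longleftrightarrow> u \<le> cdf \<mu> x"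
proof -
  interpret \<mu>: cdf_distribution \<mu> using assms(1) unfolding cdf_distribution_def .
  have "quantile \<mu> u = Inf {x. u \<le> cdf \<mu> x}" using assms(2,3) by (simp add: quantile_def)
  then show ?thesis using \<mu>.pseudoinverse[OF assms(2,3), symmetric] by simp
qed

context prob_space begin

lemma uniform_on_space_prob:
  assumes "uniform_on M (space M) U" "0 \<le> t" "t \<le> 1"
  shows "prob {x\<in>space M. U x \<le> t} = t"
  using assms unfolding uniform_on_def by (simp add: prob_space)

lemma uniform_on_AE_in_unit_interval:
  assumes U: "uniform_on M (space M) U"
  shows "AE x in M. 0 < U x \<and> U x < 1"
proof -
  have [measurable]: "U \<in> borel_measurable M" using U unfolding uniform_on_def by simp
  have "1 \<le> prob {x\<in>space M. U x < 1} + \<epsilon>" if "0 < \<epsilon>" for \<epsilon>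
  proof (cases "\<epsilon> \<le> 1")
    case True
    have "prob {x\<in>space M. U x \<le> 1 - \<epsilon>} \<le> prob {x\<in>space M. U x < 1}"
      using \<open>0 < \<epsilon>\<close> by (intro finite_measure_mono) auto
    then show ?thesis using uniform_on_space_prob[OF U, of "1 - \<epsilon>"] True that by simp
  next
    case False
    then show ?thesis by (simp add: add_increasing)
  qed
  then have "prob {x\<in>space M. U x < 1} = 1"
    by (intro antisym prob_le_1) (auto intro: field_le_epsilon)
  moreover have "{x\<in>space M. 0 < U x \<and> U x < 1} = {x\<in>space M. U x < 1} - {x\<in>space M. U x \<le> 0}"
    using U unfolding uniform_on_def by force
  moreover have "prob ({x\<in>space M. U x < 1} - {x\<in>space M. U x \<le> 0}) =
      prob {x\<in>space M. U x < 1} - prob {x\<in>space M. U x \<le> 0}"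
    by (intro finite_measure_Diff) auto
  ultimately have "prob {x\<in>space M. 0 < U x \<and> U x < 1} = 1"
    using uniform_on_space_prob[OF U, of 0] by simp
  then show ?thesis by (auto dest: AE_prob_1)
qed

lemma distr_quantile_uniform_on:
  assumes U: "uniform_on M (space M) U" and \<mu>: "real_distribution \<mu>"
  shows "distr M borel (\<lambda>x. quantile \<mu> (U x)) = \<mu>"
proof -
  interpret \<mu>: real_distribution \<mu> by (rule \<mu>)
  have [measurable]: "U \<in> borel_measurable M" "quantile \<mu> \<in> borel_measurable borel"
    using U quantile_measurable[OF \<mu>] unfolding uniform_on_def by simp_all
  have "cdf (distr M borel (\<lambda>x. quantile \<mu> (U x))) y = cdf \<mu> y" for y
  proof -
    have "cdf (distr M borel (\<lambda>x. quantile \<mu> (U x))) y = prob {x\<in>space M. quantile \<mu> (U x) \<le> y}"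
      unfolding cdf_def by (subst measure_distr) (auto intro!: arg_cong[where f="prob"])
    also have "\<dots> = prob {x\<in>space M. U x \<le> cdf \<mu> y}"
    proof (rule measure_eq_AE)
      show "AE x in M. x \<in> {x\<in>space M. quantile \<mu> (U x) \<le> y} \<longleftrightarrow> x \<in> {x\<in>space M. U x \<le> cdf \<mu> y}"
        using uniform_on_AE_in_unit_interval[OF U] by eventually_elim (simp add: quantile_le_iff[OF \<mu>])
    qed auto
    also have "\<dots> = cdf \<mu> y"
      using uniform_on_space_prob[OF U] \<mu>.cdf_nonneg \<mu>.cdf_bounded_prob by simp
    finally show ?thesis .
  qed
  then show ?thesis by (intro cdf_unique) (auto simp: \<mu>)
qed

text \<open>Compose a uniform variable that is at most \<open>P(E)\<close> on \<open>E\<close> with the quantile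
  function of the law of \<open>W\<close>.\<close>
lemma nonatomic_same_law_nonpos_on:
  assumes na: "nonatomic M" and W: "W \<in> borel_measurable M" and E: "E \<in> sets M"
    and le: "prob E \<le> prob {x\<in>space M. W x \<le> 0}"
  shows "\<exists>W'. same_law M W' W \<and> (\<forall>x\<in>E. W' x \<le> 0)"
proof -
  obtain U where U: "uniform_on M (space M) U" and UE: "\<forall>x\<in>E. U x \<le> prob E"
    using nonatomic_exists_uniform_small_on[OF na E] by blast
  define \<mu> where "\<mu> = distr M borel W"
  have \<mu>: "real_distribution \<mu>" unfolding \<mu>_def using W by auto
  have [measurable]: "U \<in> borel_measurable M" "quantile \<mu> \<in> borel_measurable borel"
    using U quantile_measurable[OF \<mu>] unfolding uniform_on_def by simp_all
  have "cdf \<mu> 0 = prob {x\<in>space M. W x \<le> 0}"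
    unfolding cdf_def \<mu>_def using W by (subst measure_distr) (auto intro!: arg_cong[where f="prob"])
  then have "quantile \<mu> (U x) \<le> 0" if "x \<in> E" for x
    using UE that le quantile_le_iff[OF \<mu>, of "U x" 0]
    by (cases "0 < U x \<and> U x < 1") (auto simp: quantile_def)
  moreover have "(\<lambda>x. quantile \<mu> (U x)) \<in> borel_measurable M" by measurable
  then have "same_law M (\<lambda>x. quantile \<mu> (U x)) W"
    unfolding same_law_def using distr_quantile_uniform_on[OF U \<mu>] W by (simp add: \<mu>_def)
  ultimately show ?thesis by blast
qed

end

section \<open>Laws, integrals and essential bounds\<close>

lemma same_law_AE:
  assumes "same_law M Y Z" "{y. P y} \<in> sets borel" "AE x in M. P (Z x)"
  shows "AE x in M. P (Y x)"
proof -
  have m: "Y \<in> borel_measurable M" "Z \<in> borel_measurable M" and d: "distr M borel Y = distr M borel Z"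
    using assms(1) unfolding same_law_def by auto
  have "AE x in distr M borel Y. P x"
    unfolding d using AE_distr_iff[OF m(2), of P] assms(2,3) by simp
  then show ?thesis using AE_distr_iff[OF m(1), of P] assms(2) by simp
qed

lemma same_law_measure:
  assumes "same_law M Y Z" "S \<in> sets borel"
  shows "measure M {x\<in>space M. Y x \<in> S} = measure M {x\<in>space M. Z x \<in> S}"
proof -
  have m: "Y \<in> borel_measurable M" "Z \<in> borel_measurable M" and d: "distr M borel Y = distr M borel Z"
    using assms(1) unfolding same_law_def by auto
  have "measure M {x\<in>space M. Y x \<in> S} = measure (distr M borel Y) S"
    using measure_distr[OF m(1) assms(2)] by (simp add: vimage_def Int_def conj_commute)
  also have "\<dots> = measure M {x\<in>space M. Z x \<in> S}"
    using measure_distr[OF m(2) assms(2)] d by (simp add: vimage_def Int_def conj_commute)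
  finally show ?thesis .
qed

lemma same_law_integral:
  assumes "same_law M Y Z" "integrable M Z"
  shows "integrable M Y" "integral\<^sup>L M Y = integral\<^sup>L M Z"
proof -
  have m: "Y \<in> borel_measurable M" "Z \<in> borel_measurable M" and d: "distr M borel Y = distr M borel Z"
    using assms(1) unfolding same_law_def by auto
  show "integrable M Y"
    using integrable_distr_eq[OF m(1), of "\<lambda>x. x"] integrable_distr_eq[OF m(2), of "\<lambda>x. x"] assms(2) d
    by simp
  show "integral\<^sup>L M Y = integral\<^sup>L M Z"
    using integral_distr[OF m(1), of "\<lambda>x. x"] integral_distr[OF m(2), of "\<lambda>x. x"] d by simp
qed

lemma Linf_mult_integrable:
  assumes "X \<in> Linf M" "integrable M Y"
  shows "integrable M (\<lambda>x. X x * Y x)"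
proof -
  obtain K where K: "AE x in M. \<bar>X x\<bar> \<le> K" and X: "X \<in> borel_measurable M"
    using assms(1) unfolding Linf_def by auto
  show ?thesis
  proof (rule Bochner_Integration.integrable_bound[where f="\<lambda>x. K * Y x"])
    show "integrable M (\<lambda>x. K * Y x)" using assms(2) by simp
    show "(\<lambda>x. X x * Y x) \<in> borel_measurable M" using X borel_measurable_integrable[OF assms(2)] by measurable
    show "AE x in M. norm (X x * Y x) \<le> norm (K * Y x)"
      using K by eventually_elim (auto simp: abs_mult intro!: mult_right_mono)
  qed
qed

lemma Linf_const: "(\<lambda>_. c) \<in> Linf M"
  unfolding Linf_def by auto

lemma Linf_add_scaled:
  assumes "X \<in> Linf M" "Y \<in> Linf M"
  shows "(\<lambda>x. X x + c * Y x) \<in> Linf M"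
proof -
  obtain K L where K: "AE x in M. \<bar>X x\<bar> \<le> K" and L: "AE x in M. \<bar>Y x\<bar> \<le> L"
    using assms unfolding Linf_def by auto
  have "AE x in M. \<bar>X x + c * Y x\<bar> \<le> K + \<bar>c\<bar> * L"
    using K L
  proof eventually_elim
    case (elim x)
    have "\<bar>X x + c * Y x\<bar> \<le> \<bar>X x\<bar> + \<bar>c\<bar> * \<bar>Y x\<bar>" by (metis abs_mult abs_triangle_ineq)
    also have "\<dots> \<le> K + \<bar>c\<bar> * L" using elim by (intro add_mono mult_left_mono) auto
    finally show ?case .
  qed
  then show ?thesis using assms unfolding Linf_def by auto
qed

context finite_measure begin

lemma measure_le_inverse_Suc_tendsto:
  assumes [measurable]: "f \<in> borel_measurable M"
  shows "(\<lambda>n. measure M {x\<in>space M. f x \<le> inverse (Suc n)}) \<longlonglongrightarrow> measure M {x\<in>space M. f x \<le> 0}"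
proof -
  have "(\<Inter>n. {x\<in>space M. f x \<le> inverse (Suc n)}) = {x\<in>space M. f x \<le> 0}"
  proof (intro equalityI subsetI)
    fix x assume x: "x \<in> (\<Inter>n. {x\<in>space M. f x \<le> inverse (Suc n)})"
    then have "(\<lambda>n. inverse (real (Suc n))) \<longlonglongrightarrow> 0" "\<forall>n. f x \<le> inverse (Suc n)"
      using LIMSEQ_inverse_real_of_nat by auto
    then show "x \<in> {x\<in>space M. f x \<le> 0}" using x by (auto intro: LIMSEQ_le_const)
  qed (auto intro: order_trans[of _ 0])
  moreover have "decseq (\<lambda>n. {x\<in>space M. f x \<le> inverse (Suc n)})"
    by (auto simp: decseq_def elim!: order_trans intro!: le_imp_inverse_le)
  moreover have "range (\<lambda>n. {x\<in>space M. f x \<le> inverse (Suc n)}) \<subseteq> sets M"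
    using assms by auto
  ultimately show ?thesis
    using finite_Lim_measure_decseq[of "\<lambda>n. {x\<in>space M. f x \<le> inverse (Suc n)}"] by simp
qed

lemma measure_gt_inverse_Suc_tendsto:
  assumes [measurable]: "f \<in> borel_measurable M"
  shows "(\<lambda>n. measure M {x\<in>space M. inverse (Suc n) < f x}) \<longlonglongrightarrow> measure M {x\<in>space M. 0 < f x}"
proof -
  have "(\<Union>n. {x\<in>space M. inverse (Suc n) < f x}) = {x\<in>space M. 0 < f x}"
  proof (intro equalityI subsetI)
    fix x assume x: "x \<in> {x\<in>space M. 0 < f x}"
    then obtain n where "inverse (real (Suc n)) < f x" using reals_Archimedean by blast
    then show "x \<in> (\<Union>n. {x\<in>space M. inverse (Suc n) < f x})" using x by auto
  qed (auto intro: order.strict_trans[rotated])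
  moreover have "incseq (\<lambda>n. {x\<in>space M. inverse (Suc n) < f x})"
  proof (intro monoI subsetI)
    fix m n :: nat and x assume "m \<le> n" and x: "x \<in> {x\<in>space M. inverse (Suc m) < f x}"
    have "inverse (real (Suc n)) \<le> inverse (real (Suc m))"
      using \<open>m \<le> n\<close> by (intro le_imp_inverse_le) auto
    then show "x \<in> {x\<in>space M. inverse (Suc n) < f x}" using x order.strict_trans1 by blast
  qed
  moreover have "range (\<lambda>n. {x\<in>space M. inverse (Suc n) < f x}) \<subseteq> sets M"
    using assms by auto
  ultimately show ?thesis
    using Lim_measure_incseq[of "\<lambda>n. {x\<in>space M. inverse (Suc n) < f x}"] by simp
qed

text \<open>A Markov-type bound: the product exceeds \<open>a \<delta>\<close> wherever \<open>W > a\<close> and \<open>V > \<delta>\<close>.\<close>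
lemma integral_mult_ge_measure_diff:
  fixes W V :: "'a \<Rightarrow> real"
  assumes [measurable]: "W \<in> borel_measurable M" "V \<in> borel_measurable M"
    and nonneg: "AE x in M. 0 \<le> W x" "AE x in M. 0 \<le> V x"
    and a: "a > 0" and \<delta>: "\<delta> > 0" and int: "integrable M (\<lambda>x. W x * V x)"
  shows "a * \<delta> * (measure M {x\<in>space M. a < W x} - measure M {x\<in>space M. V x \<le> \<delta>})
    \<le> integral\<^sup>L M (\<lambda>x. W x * V x)"
proof -
  let ?S = "{x\<in>space M. a < W x \<and> \<delta> < V x}"
  have "measure M {x\<in>space M. a < W x} \<le> measure M (?S \<union> {x\<in>space M. V x \<le> \<delta>})"
    by (intro finite_measure_mono) auto
  also have "\<dots> \<le> measure M ?S + measure M {x\<in>space M. V x \<le> \<delta>}"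
    by (intro measure_subadditive) auto
  finally have "a * \<delta> * (measure M {x\<in>space M. a < W x} - measure M {x\<in>space M. V x \<le> \<delta>}) \<le> a * \<delta> * measure M ?S"
    using a \<delta> by (intro mult_left_mono) auto
  also have "\<dots> = integral\<^sup>L M (\<lambda>x. (a * \<delta>) * indicator ?S x)"
    by simp
  also have "\<dots> \<le> integral\<^sup>L M (\<lambda>x. W x * V x)"
  proof (rule integral_mono_AE)
    show "integrable M (\<lambda>x. (a * \<delta>) * indicator ?S x)"
      using emeasure_finite[of ?S]
      by (intro integrable_mult_right integrable_real_indicator) (auto simp: less_top[symmetric])
    show "AE x in M. (a * \<delta>) * indicator ?S x \<le> W x * V x"
      using nonneg by eventually_elim (use a \<delta> in \<open>auto simp: indicator_def intro: mult_mono\<close>)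
  qed (rule int)
  finally show ?thesis .
qed

end

section \<open>The pricing setting\<close>

locale priced_asset =
  fixes M Q :: "'a measure" and S0 :: real and ST :: "'a \<Rightarrow> real"
  assumes prob_space_M: "prob_space M" and nonatomic: "nonatomic M"
    and prob_space_Q: "prob_space Q" and sets_Q: "sets Q = sets M"
    and absolutely_continuous: "absolutely_continuous M Q"
    and traded_asset: "traded_asset M S0 ST" and ST_Linf: "ST \<in> Linf M"
begin

sublocale prob_space M by (rule prob_space_M)

sublocale Q: prob_space Q by (rule prob_space_Q)

abbreviation dQdP :: "'a \<Rightarrow> real" where "dQdP \<equiv> dens M Q"

lemma S0_pos: "S0 > 0" and ST_measurable[measurable]: "ST \<in> borel_measurable M"
  and ST_nonneg: "AE x in M. 0 \<le> ST x"
  using traded_asset unfolding traded_asset_def by auto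

lemma dQdP_nonneg: "0 \<le> dQdP x"
  by (simp add: dens_def)

lemma dQdP_measurable[measurable]: "dQdP \<in> borel_measurable M"
  unfolding dens_def by measurable

lemma integral_Q_eq: "f \<in> borel_measurable M \<Longrightarrow> integral\<^sup>L Q f = (\<integral>x. dQdP x * f x \<partial>M)"
  using RN_deriv_integral[OF Q.sigma_finite_measure_axioms absolutely_continuous sets_Q]
  by (simp add: dens_def)

lemma dQdP_integrable: "integrable M dQdP"
  using RN_deriv_integrable[OF Q.sigma_finite_measure_axioms absolutely_continuous sets_Q,
      of "\<lambda>_. 1"]
  by (simp add: dens_def)

lemma same_law_dQdP:
  assumes "same_law M Y dQdP"
  shows "Y \<in> borel_measurable M" "AE x in M. 0 \<le> Y x" "integrable M Y" "integral\<^sup>L M Y = 1"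
proof -
  show "Y \<in> borel_measurable M" using assms unfolding same_law_def by simp
  show "AE x in M. 0 \<le> Y x" using same_law_AE[OF assms, of "\<lambda>y. 0 \<le> y"] dQdP_nonneg by simp
  show "integrable M Y" using same_law_integral(1)[OF assms dQdP_integrable] .
  show "integral\<^sup>L M Y = 1"
    using same_law_integral(2)[OF assms dQdP_integrable] integral_Q_eq[of "\<lambda>_. 1"]
      Q.prob_space by simp
qed

lemma same_law_ST:
  assumes "same_law M Z ST"
  shows "Z \<in> borel_measurable M" "AE x in M. 0 \<le> Z x" "Z \<in> Linf M"
proof -
  show Z: "Z \<in> borel_measurable M" using assms unfolding same_law_def by simp
  show "AE x in M. 0 \<le> Z x" using same_law_AE[OF assms, of "\<lambda>y. 0 \<le> y"] ST_nonneg by simp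
  obtain K where "AE x in M. \<bar>ST x\<bar> \<le> K" using ST_Linf unfolding Linf_def by auto
  then have "AE x in M. \<bar>Z x\<bar> \<le> K" using same_law_AE[OF assms, of "\<lambda>y. \<bar>y\<bar> \<le> K"] by simp
  then show "Z \<in> Linf M" using Z unfolding Linf_def by auto
qed

lemma accQ_iff:
  "X \<in> accQ M Q \<longleftrightarrow> X \<in> Linf M \<and> (\<forall>Y. same_law M Y dQdP \<longrightarrow> 0 \<le> (\<integral>x. X x * Y x \<partial>M))"
  unfolding accQ_def by simp

definition separated :: bool where
  "separated \<longleftrightarrow> (\<exists>a>0. \<exists>\<delta>>0. prob {x\<in>space M. dQdP x \<le> \<delta>} < prob {x\<in>space M. a < ST x})"

lemma separated_lower_bound:
  assumes separated
  shows "\<exists>c>0. (\<forall>Y. same_law M Y dQdP \<longrightarrow> c \<le> (\<integral>x. ST x * Y x \<partial>M)) \<and>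
    (\<forall>Z. same_law M Z ST \<longrightarrow> c \<le> integral\<^sup>L Q Z)"
proof -
  obtain a \<delta> where a: "a > 0" and \<delta>: "\<delta> > 0"
    and lt: "prob {x\<in>space M. dQdP x \<le> \<delta>} < prob {x\<in>space M. a < ST x}"
    using assms unfolding separated_def by auto
  define c where "c = a * \<delta> * (prob {x\<in>space M. a < ST x} - prob {x\<in>space M. dQdP x \<le> \<delta>})"
  have "c \<le> (\<integral>x. ST x * Y x \<partial>M)" if Y: "same_law M Y dQdP" for Y
  proof -
    have "prob {x\<in>space M. Y x \<le> \<delta>} = prob {x\<in>space M. dQdP x \<le> \<delta>}"
      using same_law_measure[OF Y, of "{..\<delta>}"] by simp
    then show ?thesis
      using integral_mult_ge_measure_diff[of ST Y a \<delta>] a \<delta> ST_nonneg same_law_dQdP[OF Y]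
        Linf_mult_integrable[OF ST_Linf same_law_dQdP(3)[OF Y]]
      by (simp add: c_def)
  qed
  moreover have "c \<le> integral\<^sup>L Q Z" if Z: "same_law M Z ST" for Z
  proof -
    have "prob {x\<in>space M. a < Z x} = prob {x\<in>space M. a < ST x}"
      using same_law_measure[OF Z, of "{a<..}"] by simp
    then have "c \<le> (\<integral>x. Z x * dQdP x \<partial>M)"
      using integral_mult_ge_measure_diff[of Z dQdP a \<delta>] a \<delta> same_law_ST[OF Z] dQdP_nonneg
        Linf_mult_integrable[OF same_law_ST(3)[OF Z] dQdP_integrable]
      by (simp add: c_def)
    then show ?thesis using integral_Q_eq[OF same_law_ST(1)[OF Z]] by (simp add: mult.commute)
  qed
  moreover have "0 < c" unfolding c_def using a \<delta> lt by simp
  ultimately show ?thesis by blast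
qed

lemma integral_shift_mult:
  assumes "X \<in> Linf M" "same_law M Y dQdP"
  shows "(\<integral>x. (X x + r * ST x) * Y x \<partial>M) = (\<integral>x. X x * Y x \<partial>M) + r * (\<integral>x. ST x * Y x \<partial>M)"
proof -
  have "(\<lambda>x. (X x + r * ST x) * Y x) = (\<lambda>x. X x * Y x + r * (ST x * Y x))"
    by (auto simp: fun_eq_iff algebra_simps)
  then show ?thesis
    using Linf_mult_integrable[OF assms(1) same_law_dQdP(3)[OF assms(2)]]
      Linf_mult_integrable[OF ST_Linf same_law_dQdP(3)[OF assms(2)]] by simp
qed

text \<open>Testing acceptability against \<open>Y = dQ/dP\<close> itself bounds \<open>\<rho>\<close> from below.\<close>
lemma accQ_shift_lower_bound:
  assumes X: "X \<in> Linf M" and acc: "(\<lambda>x. X x + m / S0 * ST x) \<in> accQ M Q"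
    and pos: "0 < (\<integral>x. ST x * dQdP x \<partial>M)"
  shows "- S0 * (\<integral>x. X x * dQdP x \<partial>M) / (\<integral>x. ST x * dQdP x \<partial>M) \<le> m"
proof -
  have dQdP: "same_law M dQdP dQdP" unfolding same_law_def by simp
  then have "0 \<le> (\<integral>x. (X x + m / S0 * ST x) * dQdP x \<partial>M)"
    using acc unfolding accQ_iff by blast
  then have "0 \<le> (\<integral>x. X x * dQdP x \<partial>M) + m / S0 * (\<integral>x. ST x * dQdP x \<partial>M)"
    unfolding integral_shift_mult[OF X dQdP] .
  then have "- S0 * (\<integral>x. X x * dQdP x \<partial>M) \<le> m * (\<integral>x. ST x * dQdP x \<partial>M)"
    using S0_pos by (simp add: field_simps)
  then show ?thesis by (subst pos_divide_le_eq[OF pos]) simp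
qed

lemma accQ_shift_mem:
  assumes c: "0 < c" and bound: "\<And>Y. same_law M Y dQdP \<Longrightarrow> c \<le> (\<integral>x. ST x * Y x \<partial>M)"
    and X: "X \<in> Linf M" and K: "0 \<le> K" "AE x in M. \<bar>X x\<bar> \<le> K"
  shows "(\<lambda>x. X x + (S0 * K / c) / S0 * ST x) \<in> accQ M Q"
  unfolding accQ_iff
proof (intro conjI allI impI)
  show "(\<lambda>x. X x + (S0 * K / c) / S0 * ST x) \<in> Linf M" using Linf_add_scaled[OF X ST_Linf] .
  fix Y assume Y: "same_law M Y dQdP"
  note Y_props = same_law_dQdP[OF Y]
  have "(\<integral>x. - K * Y x \<partial>M) \<le> (\<integral>x. X x * Y x \<partial>M)"
  proof (rule integral_mono_AE)
    show "AE x in M. - K * Y x \<le> X x * Y x"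
      using K(2) Y_props(2)
    proof eventually_elim
      case (elim x)
      then have "- K \<le> X x" by linarith
      from mult_right_mono[OF this elim(2)] show ?case .
    qed
  qed (use Y_props Linf_mult_integrable[OF X Y_props(3)] in auto)
  then have "- K \<le> (\<integral>x. X x * Y x \<partial>M)" using Y_props(4) by simp
  moreover have "K \<le> (S0 * K / c) / S0 * (\<integral>x. ST x * Y x \<partial>M)"
    using mult_left_mono[OF bound[OF Y], of "K / c"] K(1) c S0_pos by simp
  ultimately show "0 \<le> (\<integral>x. (X x + (S0 * K / c) / S0 * ST x) * Y x \<partial>M)"
    using integral_shift_mult[OF X Y] by simp
qed

lemma rho_finite_of_lower_bound:
  assumes c: "0 < c" and bound: "\<And>Y. same_law M Y dQdP \<Longrightarrow> c \<le> (\<integral>x. ST x * Y x \<partial>M)"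
    and X: "X \<in> Linf M"
  shows "\<bar>rho (accQ M Q) S0 ST X\<bar> \<noteq> \<infinity>"
proof -
  obtain K where K: "AE x in M. \<bar>X x\<bar> \<le> K" using X unfolding Linf_def by auto
  then have "AE x in M. 0 \<le> K" by eventually_elim (rule order_trans[OF abs_ge_zero])
  then have "0 \<le> K" by simp
  have "same_law M dQdP dQdP" unfolding same_law_def by simp
  then have "0 < (\<integral>x. ST x * dQdP x \<partial>M)" using bound c by (meson less_le_trans)
  then have "ereal (- S0 * (\<integral>x. X x * dQdP x \<partial>M) / (\<integral>x. ST x * dQdP x \<partial>M)) \<le> rho (accQ M Q) S0 ST X"
    unfolding rho_def using accQ_shift_lower_bound[OF X] by (intro Inf_greatest) auto
  moreover have "rho (accQ M Q) S0 ST X \<le> ereal (S0 * K / c)"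
    unfolding rho_def by (intro Inf_lower imageI CollectI accQ_shift_mem[OF c bound X \<open>0 \<le> K\<close> K])
  ultimately show ?thesis by (cases "rho (accQ M Q) S0 ST X") auto
qed

lemma bdd_below_prices: "bdd_below {integral\<^sup>L Q Z | Z. same_law M Z ST}"
proof (rule bdd_belowI[of _ 0])
  fix v assume "v \<in> {integral\<^sup>L Q Z | Z. same_law M Z ST}"
  then obtain Z where Z: "same_law M Z ST" "v = integral\<^sup>L Q Z" by auto
  have "0 \<le> (\<integral>x. dQdP x * Z x \<partial>M)"
    using same_law_ST(2)[OF Z(1)] dQdP_nonneg by (intro integral_nonneg_AE) (auto elim: eventually_mono)
  then show "0 \<le> v" using Z integral_Q_eq[OF same_law_ST(1)[OF Z(1)]] by simp
qed

lemma Inf_prices_pos_of_lower_bound: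
  assumes "0 < c" "\<And>Z. same_law M Z ST \<Longrightarrow> c \<le> integral\<^sup>L Q Z"
  shows "Inf {integral\<^sup>L Q Z | Z. same_law M Z ST} > 0"
proof -
  have "same_law M ST ST" unfolding same_law_def by simp
  then have "c \<le> Inf {integral\<^sup>L Q Z | Z. same_law M Z ST}"
    using assms(2) by (intro cInf_greatest) auto
  then show ?thesis using assms(1) by simp
qed

lemma not_separated_prob_le:
  assumes "\<not> separated"
  shows "prob {x\<in>space M. 0 < ST x} \<le> prob {x\<in>space M. dQdP x \<le> 0}"
proof -
  have le: "prob {x\<in>space M. a < ST x} \<le> prob {x\<in>space M. dQdP x \<le> \<delta>}" if "0 < a" "0 < \<delta>" for a \<delta>
    using assms that unfolding separated_def by (meson not_le)
  have "prob {x\<in>space M. a < ST x} \<le> prob {x\<in>space M. dQdP x \<le> 0}" if "0 < a" for a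
    by (rule LIMSEQ_le_const[OF measure_le_inverse_Suc_tendsto[OF dQdP_measurable]]) (auto intro!: le that)
  then show ?thesis
    by (intro LIMSEQ_le_const2[OF measure_gt_inverse_Suc_tendsto[OF ST_measurable]]) auto
qed

text \<open>Rearranging \<open>S\<^sub>T\<close> onto the event \<open>{dQ/dP = 0}\<close> gives a price \<open>0\<close>.\<close>
lemma Inf_prices_nonpos:
  assumes "prob {x\<in>space M. 0 < ST x} \<le> prob {x\<in>space M. dQdP x \<le> 0}"
  shows "\<not> Inf {integral\<^sup>L Q Z | Z. same_law M Z ST} > 0"
proof -
  let ?E = "{x\<in>space M. 0 < dQdP x}"
  have "space M - {x\<in>space M. dQdP x \<le> 0} = ?E" "space M - {x\<in>space M. 0 < ST x} = {x\<in>space M. ST x \<le> 0}"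
    by auto
  then have "prob ?E = 1 - prob {x\<in>space M. dQdP x \<le> 0}"
    and "prob {x\<in>space M. ST x \<le> 0} = 1 - prob {x\<in>space M. 0 < ST x}"
    using prob_compl[of "{x\<in>space M. dQdP x \<le> 0}"] prob_compl[of "{x\<in>space M. 0 < ST x}"] by simp_all
  then obtain Z where Z: "same_law M Z ST" and ZE: "\<forall>x\<in>?E. Z x \<le> 0"
    using nonatomic_same_law_nonpos_on[OF nonatomic ST_measurable, of ?E] assms by auto
  have "AE x in M. dQdP x * Z x = 0"
    using same_law_ST(2)[OF Z] AE_space
  proof eventually_elim
    case (elim x)
    then show ?case using ZE dQdP_nonneg[of x] by (cases "0 < dQdP x") auto
  qed
  then have "(\<integral>x. dQdP x * Z x \<partial>M) = 0" by (rule integral_eq_zero_AE)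
  then have "integral\<^sup>L Q Z = 0" using integral_Q_eq[OF same_law_ST(1)[OF Z]] by simp
  then have "Inf {integral\<^sup>L Q Z | Z. same_law M Z ST} \<le> 0"
    using Z bdd_below_prices by (intro cInf_lower2[of 0]) auto
  then show ?thesis by simp
qed

text \<open>Rearranging \<open>dQ/dP\<close> onto \<open>{S\<^sub>T = 0}\<close> gives a test density against which no
  amount of the asset makes the constant \<open>-1\<close> acceptable.\<close>
lemma rho_minus_one_infinite:
  assumes "prob {x\<in>space M. 0 < ST x} \<le> prob {x\<in>space M. dQdP x \<le> 0}"
  shows "rho (accQ M Q) S0 ST (\<lambda>_. -1) = \<infinity>"
proof -
  obtain Y where Y: "same_law M Y dQdP" and YE: "\<forall>x\<in>{x\<in>space M. 0 < ST x}. Y x \<le> 0"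
    using nonatomic_same_law_nonpos_on[OF nonatomic dQdP_measurable, of "{x\<in>space M. 0 < ST x}"] assms by auto
  note Y_props = same_law_dQdP[OF Y]
  have "AE x in M. ST x * Y x = 0"
    using Y_props(2) ST_nonneg AE_space
  proof eventually_elim
    case (elim x)
    then show ?case using YE by (cases "0 < ST x") auto
  qed
  then have "(\<integral>x. ST x * Y x \<partial>M) = 0" by (rule integral_eq_zero_AE)
  then have "(\<integral>x. (-1 + m / S0 * ST x) * Y x \<partial>M) = -1" for m
    using integral_shift_mult[OF Linf_const Y, of "-1" "m / S0"] Y_props(4) by simp
  then have "(\<lambda>x. -1 + m / S0 * ST x) \<notin> accQ M Q" for m
    using Y unfolding accQ_iff by (metis neg_0_le_iff_le not_one_le_zero)
  then have "{m. (\<lambda>x. -1 + m / S0 * ST x) \<in> accQ M Q} = {}" by blast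
  then show ?thesis unfolding rho_def by (simp add: top_ereal_def)
qed

end

theorem proposition7p1:
  fixes M Q :: "'a measure" and S0 :: real and ST :: "'a \<Rightarrow> real"
  assumes "prob_space M" and "nonatomic M"
    and "prob_space Q" and "sets Q = sets M" and "absolutely_continuous M Q"
    and "traded_asset M S0 ST" and "ST \<in> Linf M"
  shows "(\<forall>X\<in>Linf M. \<bar>rho (accQ M Q) S0 ST X\<bar> \<noteq> \<infinity>) \<longleftrightarrow>
         Inf {integral\<^sup>L Q Z | Z. same_law M Z ST} > 0"
proof -
  interpret priced_asset M Q S0 ST
    using assms by (simp add: priced_asset_def)
  show ?thesis
  proof (cases separated)
    case True
    obtain c where c: "0 < c"
      and bound_dQdP: "\<forall>Y. same_law M Y dQdP \<longrightarrow> c \<le> (\<integral>x. ST x * Y x \<partial>M)"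
      and bound_ST: "\<forall>Z. same_law M Z ST \<longrightarrow> c \<le> integral\<^sup>L Q Z"
      using separated_lower_bound[OF True] by blast
    have "\<forall>X\<in>Linf M. \<bar>rho (accQ M Q) S0 ST X\<bar> \<noteq> \<infinity>"
      using rho_finite_of_lower_bound[OF c bound_dQdP[rule_format]] by simp
    moreover have "Inf {integral\<^sup>L Q Z | Z. same_law M Z ST} > 0"
      using Inf_prices_pos_of_lower_bound[OF c bound_ST[rule_format]] by simp
    ultimately show ?thesis by simp
  next
    case False
    then have le: "prob {x\<in>space M. 0 < ST x} \<le> prob {x\<in>space M. dQdP x \<le> 0}"
      by (rule not_separated_prob_le)
    have "\<not> (\<forall>X\<in>Linf M. \<bar>rho (accQ M Q) S0 ST X\<bar> \<noteq> \<infinity>)"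
    proof
      assume "\<forall>X\<in>Linf M. \<bar>rho (accQ M Q) S0 ST X\<bar> \<noteq> \<infinity>"
      from bspec[OF this Linf_const[of "-1"]] show False using rho_minus_one_infinite[OF le] by simp
    qed
    then show ?thesis using Inf_prices_nonpos[OF le] by simp
  qed
qed

end
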